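(* Let $\mathcal{C}$ be a skeletally small triangulated category, $H$ a $\mathbb{Q}$-subspace of $G(\mathcal{C})_{\mathbb{Q}}$, and $\mathcal{I}(H)$ the set of dense subcategories $\mathcal{D}$ of $\mathcal{C}$ with $\operatorname{image}(G(\mathcal{D})_{\mathbb{Q}}\to G(\mathcal{C})_{\mathbb{Q}})=H$, ordered by inclusion. Then every maximal element of $\mathcal{I}(H)$ is a radical dense subcategory of $\mathcal{C}$.
   Context: $G(-)$ denotes the Grothendieck group of a triangulated category; $H_{\mathbb{Q}}=H\otimes_{\mathbb{Z}}\mathbb{Q}$. A dense subcategory is a triangulated subcategory $\mathcal{D}$ (full, closed under $[\pm1]$, isomorphisms and cones) such that for every $U\in\mathcal{C}$ there is $V$ with $U\oplus V\in\mathcal{D}$; it is radical if $U^n\in\mathcal{D}$ for some $n\ge1$ implies $U\in\mathcal{D}$. *)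

theory Defs
  imports Complex_Main
begin

text \<open>Objects have type 'o, morphisms have type 'm (every element of 'm is a morphism).
Since objects form a type (hence a set), the category is (skeletally) small.\<close>

record ('o, 'm) tricat =
  tsrc  :: "'m \<Rightarrow> 'o"
  ttgt  :: "'m \<Rightarrow> 'o"
  tcomp :: "'m \<Rightarrow> 'm \<Rightarrow> 'm"   (* tcomp g f = g o f *)
  tid   :: "'o \<Rightarrow> 'm"
  tadd  :: "'m \<Rightarrow> 'm \<Rightarrow> 'm"
  tneg  :: "'m \<Rightarrow> 'm"
  tzero :: "'o \<Rightarrow> 'o \<Rightarrow> 'm"
  tsh   :: "'o \<Rightarrow> 'o"
  tshm  :: "'m \<Rightarrow> 'm"
  tdist :: "('m \<times> 'm \<times> 'm) set"

definition hom :: "('o, 'm) tricat \<Rightarrow> 'o \<Rightarrow> 'o \<Rightarrow> 'm set" where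
  "hom C X Y = {f. tsrc C f = X \<and> ttgt C f = Y}"

definition is_iso :: "('o, 'm) tricat \<Rightarrow> 'm \<Rightarrow> bool" where
  "is_iso C f \<longleftrightarrow> (\<exists>g \<in> hom C (ttgt C f) (tsrc C f).
      tcomp C g f = tid C (tsrc C f) \<and> tcomp C f g = tid C (ttgt C f))"

definition isomorphic :: "('o, 'm) tricat \<Rightarrow> 'o \<Rightarrow> 'o \<Rightarrow> bool" where
  "isomorphic C X Y \<longleftrightarrow> (\<exists>f \<in> hom C X Y. is_iso C f)"

definition is_category :: "('o, 'm) tricat \<Rightarrow> bool" where
  "is_category C \<longleftrightarrow>
     (\<forall>f g. tsrc C g = ttgt C f \<longrightarrow> tcomp C g f \<in> hom C (tsrc C f) (ttgt C g)) \<and>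
     (\<forall>X. tid C X \<in> hom C X X) \<and>
     (\<forall>f. tcomp C f (tid C (tsrc C f)) = f \<and> tcomp C (tid C (ttgt C f)) f = f) \<and>
     (\<forall>f g h. tsrc C g = ttgt C f \<longrightarrow> tsrc C h = ttgt C g \<longrightarrow>
        tcomp C h (tcomp C g f) = tcomp C (tcomp C h g) f)"

definition is_preadditive :: "('o, 'm) tricat \<Rightarrow> bool" where
  "is_preadditive C \<longleftrightarrow> is_category C \<and>
     (\<forall>X Y. tzero C X Y \<in> hom C X Y) \<and>
     (\<forall>X Y f g. f \<in> hom C X Y \<longrightarrow> g \<in> hom C X Y \<longrightarrow> tadd C f g \<in> hom C X Y) \<and>
     (\<forall>f. tneg C f \<in> hom C (tsrc C f) (ttgt C f)) \<and>
     (\<forall>X Y f g h. f \<in> hom C X Y \<longrightarrow> g \<in> hom C X Y \<longrightarrow> h \<in> hom C X Y \<longrightarrow>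
        tadd C (tadd C f g) h = tadd C f (tadd C g h) \<and>
        tadd C f g = tadd C g f \<and>
        tadd C f (tzero C X Y) = f \<and>
        tadd C f (tneg C f) = tzero C X Y) \<and>
     (\<forall>V X Y W f g h k. f \<in> hom C X Y \<longrightarrow> g \<in> hom C X Y \<longrightarrow> h \<in> hom C Y W \<longrightarrow> k \<in> hom C V X \<longrightarrow>
        tcomp C h (tadd C f g) = tadd C (tcomp C h f) (tcomp C h g) \<and>
        tcomp C (tadd C f g) k = tadd C (tcomp C f k) (tcomp C g k))"

definition is_zero_obj :: "('o, 'm) tricat \<Rightarrow> 'o \<Rightarrow> bool" where
  "is_zero_obj C Z \<longleftrightarrow> tid C Z = tzero C Z Z"

definition is_biprod :: "('o, 'm) tricat \<Rightarrow> 'o \<Rightarrow> 'o \<Rightarrow> 'o \<Rightarrow> bool" where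
  "is_biprod C X Y S \<longleftrightarrow> (\<exists>i1 i2 p1 p2.
     i1 \<in> hom C X S \<and> i2 \<in> hom C Y S \<and> p1 \<in> hom C S X \<and> p2 \<in> hom C S Y \<and>
     tcomp C p1 i1 = tid C X \<and> tcomp C p2 i2 = tid C Y \<and>
     tcomp C p2 i1 = tzero C X Y \<and> tcomp C p1 i2 = tzero C Y X \<and>
     tadd C (tcomp C i1 p1) (tcomp C i2 p2) = tid C S)"

definition is_additive :: "('o, 'm) tricat \<Rightarrow> bool" where
  "is_additive C \<longleftrightarrow> is_preadditive C \<and> (\<exists>Z. is_zero_obj C Z) \<and>
     (\<forall>X Y. \<exists>S. is_biprod C X Y S)"

definition shift_ok :: "('o, 'm) tricat \<Rightarrow> bool" where
  "shift_ok C \<longleftrightarrow>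
     (\<forall>f. tshm C f \<in> hom C (tsh C (tsrc C f)) (tsh C (ttgt C f))) \<and>
     (\<forall>X. tshm C (tid C X) = tid C (tsh C X)) \<and>
     (\<forall>f g. tsrc C g = ttgt C f \<longrightarrow> tshm C (tcomp C g f) = tcomp C (tshm C g) (tshm C f)) \<and>
     (\<forall>X Y f g. f \<in> hom C X Y \<longrightarrow> g \<in> hom C X Y \<longrightarrow>
        tshm C (tadd C f g) = tadd C (tshm C f) (tshm C g)) \<and>
     (\<forall>X Y. bij_betw (tshm C) (hom C X Y) (hom C (tsh C X) (tsh C Y))) \<and>
     (\<forall>Y. \<exists>X. isomorphic C (tsh C X) Y)"

definition is_triangle :: "('o, 'm) tricat \<Rightarrow> 'm \<times> 'm \<times> 'm \<Rightarrow> bool" where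
  "is_triangle C T \<longleftrightarrow> (case T of (f, g, h) \<Rightarrow>
     tsrc C g = ttgt C f \<and> tsrc C h = ttgt C g \<and> ttgt C h = tsh C (tsrc C f))"

definition tri_morph :: "('o, 'm) tricat \<Rightarrow> 'm \<times> 'm \<times> 'm \<Rightarrow> 'm \<times> 'm \<times> 'm \<Rightarrow> 'm \<Rightarrow> 'm \<Rightarrow> 'm \<Rightarrow> bool" where
  "tri_morph C T T' a b c \<longleftrightarrow> (case T of (f, g, h) \<Rightarrow> case T' of (f', g', h') \<Rightarrow>
     a \<in> hom C (tsrc C f) (tsrc C f') \<and> b \<in> hom C (ttgt C f) (ttgt C f') \<and>
     c \<in> hom C (ttgt C g) (ttgt C g') \<and>
     tcomp C f' a = tcomp C b f \<and> tcomp C g' b = tcomp C c g \<and>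
     tcomp C h' c = tcomp C (tshm C a) h)"

definition is_triangulated :: "('o, 'm) tricat \<Rightarrow> bool" where
  "is_triangulated C \<longleftrightarrow> is_additive C \<and> shift_ok C \<and>
     (\<forall>T \<in> tdist C. is_triangle C T) \<and>
     \<comment> \<open>TR1\<close>
     (\<forall>X Z. is_zero_obj C Z \<longrightarrow> (tid C X, tzero C X Z, tzero C Z (tsh C X)) \<in> tdist C) \<and>
     (\<forall>T T' a b c. T \<in> tdist C \<longrightarrow> is_triangle C T' \<longrightarrow> tri_morph C T T' a b c \<longrightarrow>
        is_iso C a \<longrightarrow> is_iso C b \<longrightarrow> is_iso C c \<longrightarrow> T' \<in> tdist C) \<and>
     (\<forall>f. \<exists>g h. (f, g, h) \<in> tdist C) \<and>
     \<comment> \<open>TR2 (rotation)\<close>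
     (\<forall>f g h. is_triangle C (f, g, h) \<longrightarrow>
        ((f, g, h) \<in> tdist C \<longleftrightarrow> (g, h, tneg C (tshm C f)) \<in> tdist C)) \<and>
     \<comment> \<open>TR3\<close>
     (\<forall>f g h f' g' h' a b. (f, g, h) \<in> tdist C \<longrightarrow> (f', g', h') \<in> tdist C \<longrightarrow>
        a \<in> hom C (tsrc C f) (tsrc C f') \<longrightarrow> b \<in> hom C (ttgt C f) (ttgt C f') \<longrightarrow>
        tcomp C f' a = tcomp C b f \<longrightarrow>
        (\<exists>c. tri_morph C (f, g, h) (f', g', h') a b c)) \<and>
     \<comment> \<open>TR4 (octahedral axiom)\<close>
     (\<forall>u v j d l e m n. tsrc C v = ttgt C u \<longrightarrow>
        (u, j, d) \<in> tdist C \<longrightarrow> (v, l, e) \<in> tdist C \<longrightarrow> (tcomp C v u, m, n) \<in> tdist C \<longrightarrow>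
        (\<exists>a b. (a, b, tcomp C (tshm C j) e) \<in> tdist C \<and>
           tcomp C a j = tcomp C m v \<and> tcomp C n a = d \<and>
           tcomp C b m = l \<and> tcomp C e b = tcomp C (tshm C u) n))"

text \<open>Full subcategories are given by their sets of objects.\<close>
definition triangulated_subcat :: "('o, 'm) tricat \<Rightarrow> 'o set \<Rightarrow> bool" where
  "triangulated_subcat C D \<longleftrightarrow>
     (\<forall>X Y. X \<in> D \<longrightarrow> isomorphic C X Y \<longrightarrow> Y \<in> D) \<and>
     (\<forall>X. X \<in> D \<longrightarrow> tsh C X \<in> D) \<and>
     (\<forall>X. tsh C X \<in> D \<longrightarrow> X \<in> D) \<and>
     (\<forall>f g h. (f, g, h) \<in> tdist C \<longrightarrow> tsrc C f \<in> D \<longrightarrow> ttgt C f \<in> D \<longrightarrow> ttgt C g \<in> D)"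

definition dense_subcat :: "('o, 'm) tricat \<Rightarrow> 'o set \<Rightarrow> bool" where
  "dense_subcat C D \<longleftrightarrow> triangulated_subcat C D \<and>
     (\<forall>U. \<exists>V S. is_biprod C U V S \<and> S \<in> D)"

primrec hsum :: "('o, 'm) tricat \<Rightarrow> 'o \<Rightarrow> 'o \<Rightarrow> (nat \<Rightarrow> 'm) \<Rightarrow> nat \<Rightarrow> 'm" where
  "hsum C X Y F 0 = tzero C X Y"
| "hsum C X Y F (Suc n) = tadd C (hsum C X Y F n) (F n)"

definition is_power :: "('o, 'm) tricat \<Rightarrow> 'o \<Rightarrow> nat \<Rightarrow> 'o \<Rightarrow> bool" where
  "is_power C U n P \<longleftrightarrow> (\<exists>i p :: nat \<Rightarrow> 'm.
     (\<forall>k<n. i k \<in> hom C U P \<and> p k \<in> hom C P U) \<and>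
     (\<forall>k<n. \<forall>l<n. tcomp C (p k) (i l) = (if k = l then tid C U else tzero C U U)) \<and>
     hsum C P P (\<lambda>k. tcomp C (i k) (p k)) n = tid C P)"

definition radical_subcat :: "('o, 'm) tricat \<Rightarrow> 'o set \<Rightarrow> bool" where
  "radical_subcat C D \<longleftrightarrow>
     (\<forall>U n P. n \<ge> 1 \<longrightarrow> is_power C U n P \<longrightarrow> P \<in> D \<longrightarrow> U \<in> D)"

text \<open>G(C)_Q = (free Q-vector space on the objects) / (Q-span of [Y]-[X]-[Z] for
distinguished triangles X -> Y -> Z -> X[1]). A Q-subspace of G(C)_Q is represented
by its preimage in the free space, i.e. a subspace containing the relations.\<close>

definition free_Q :: "('o \<Rightarrow> rat) set" where
  "free_Q = {v. finite {x. v x \<noteq> 0}}"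

definition gen :: "'o \<Rightarrow> 'o \<Rightarrow> rat" where
  "gen X = (\<lambda>Y. if Y = X then 1 else 0)"

inductive_set qspan :: "('o \<Rightarrow> rat) set \<Rightarrow> ('o \<Rightarrow> rat) set" for S where
  zero: "(\<lambda>_. 0) \<in> qspan S"
| base: "v \<in> S \<Longrightarrow> v \<in> qspan S"
| add: "u \<in> qspan S \<Longrightarrow> w \<in> qspan S \<Longrightarrow> (\<lambda>x. u x + w x) \<in> qspan S"
| smult: "u \<in> qspan S \<Longrightarrow> (\<lambda>x. c * u x) \<in> qspan S"

definition groth_rels :: "('o, 'm) tricat \<Rightarrow> ('o \<Rightarrow> rat) set" where
  "groth_rels C = {(\<lambda>x. gen (ttgt C f) x - gen (tsrc C f) x - gen (ttgt C g) x)
                   | f g h. (f, g, h) \<in> tdist C}"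

definition is_Q_subspace :: "('o \<Rightarrow> rat) set \<Rightarrow> bool" where
  "is_Q_subspace H \<longleftrightarrow> H \<subseteq> free_Q \<and> (\<lambda>_. 0) \<in> H \<and>
     (\<forall>u \<in> H. \<forall>w \<in> H. (\<lambda>x. u x + w x) \<in> H) \<and>
     (\<forall>c. \<forall>u \<in> H. (\<lambda>x. c * u x) \<in> H)"

text \<open>Preimage in the free space of image(G(D)_Q -> G(C)_Q): the span of the
classes of objects of D, plus the relations.\<close>
definition image_GQ :: "('o, 'm) tricat \<Rightarrow> 'o set \<Rightarrow> ('o \<Rightarrow> rat) set" where
  "image_GQ C D = qspan (gen ` D \<union> groth_rels C)"

definition I_H :: "('o, 'm) tricat \<Rightarrow> ('o \<Rightarrow> rat) set \<Rightarrow> 'o set set" where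
  "I_H C H = {D. dense_subcat C D \<and> image_GQ C D = H}"

end

theory Submission
  imports Defs
begin

text \<open>Let D' be the set of objects whose class in G(C)_Q lies in H. Because H contains
  the relations of G(C)_Q, D' is closed under isomorphisms, shifts and cones; it contains
  every member of I(H), so it is dense with image H, i.e. it is the largest element of I(H).
  A maximal D is therefore D'. If U^n lies in D', then rotating the distinguished triangle
  on the split monomorphism U \<rightarrow> U^n shows that its cone is U^(n-1), so
  [U^n] = n[U] in G(C)_Q and [U] = [U^n]/n lies in H.\<close>

locale triangulated_category =
  fixes C :: "('o, 'm) tricat"
  assumes triangulated: "is_triangulated C"
begin

lemma additive: "is_additive C"
  using triangulated unfolding is_triangulated_def by (elim conjE) blast

lemma preadditive: "is_preadditive C"
  using additive unfolding is_additive_def by blast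

lemma category: "is_category C"
  using preadditive unfolding is_preadditive_def by blast

lemma comp_src [simp]: "tsrc C g = ttgt C f \<Longrightarrow> tsrc C (tcomp C g f) = tsrc C f"
  using category unfolding is_category_def hom_def by simp

lemma comp_tgt [simp]: "tsrc C g = ttgt C f \<Longrightarrow> ttgt C (tcomp C g f) = ttgt C g"
  using category unfolding is_category_def hom_def by simp

lemma id_src [simp]: "tsrc C (tid C X) = X"
  using category unfolding is_category_def hom_def by simp

lemma id_tgt [simp]: "ttgt C (tid C X) = X"
  using category unfolding is_category_def hom_def by simp

lemma comp_id_right [simp]: "tsrc C f = X \<Longrightarrow> tcomp C f (tid C X) = f"
  using category unfolding is_category_def by auto

lemma comp_id_left [simp]: "ttgt C f = Y \<Longrightarrow> tcomp C (tid C Y) f = f"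
  using category unfolding is_category_def by auto

lemma comp_assoc:
  "tsrc C g = ttgt C f \<Longrightarrow> tsrc C h = ttgt C g \<Longrightarrow>
    tcomp C (tcomp C h g) f = tcomp C h (tcomp C g f)"
  using category unfolding is_category_def by simp

lemma zero_src [simp]: "tsrc C (tzero C X Y) = X"
  using preadditive unfolding is_preadditive_def hom_def by simp

lemma zero_tgt [simp]: "ttgt C (tzero C X Y) = Y"
  using preadditive unfolding is_preadditive_def hom_def by simp

lemma neg_src [simp]: "tsrc C (tneg C f) = tsrc C f"
  using preadditive unfolding is_preadditive_def hom_def by simp

lemma neg_tgt [simp]: "ttgt C (tneg C f) = ttgt C f"
  using preadditive unfolding is_preadditive_def hom_def by simp

lemma add_src [simp]: "tsrc C g = tsrc C f \<Longrightarrow> ttgt C g = ttgt C f \<Longrightarrow> tsrc C (tadd C f g) = tsrc C f"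
  using preadditive unfolding is_preadditive_def hom_def by simp

lemma add_tgt [simp]: "tsrc C g = tsrc C f \<Longrightarrow> ttgt C g = ttgt C f \<Longrightarrow> ttgt C (tadd C f g) = ttgt C f"
  using preadditive unfolding is_preadditive_def hom_def by simp

lemma hom_abelian_group_laws:
  "\<forall>X Y f g h. f \<in> hom C X Y \<longrightarrow> g \<in> hom C X Y \<longrightarrow> h \<in> hom C X Y \<longrightarrow>
      tadd C (tadd C f g) h = tadd C f (tadd C g h) \<and> tadd C f g = tadd C g f \<and>
      tadd C f (tzero C X Y) = f \<and> tadd C f (tneg C f) = tzero C X Y"
  using preadditive unfolding is_preadditive_def by (elim conjE)

lemma comp_bilinear_laws:
  "\<forall>V X Y W f g h k. f \<in> hom C X Y \<longrightarrow> g \<in> hom C X Y \<longrightarrow> h \<in> hom C Y W \<longrightarrow> k \<in> hom C V X \<longrightarrow>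
      tcomp C h (tadd C f g) = tadd C (tcomp C h f) (tcomp C h g) \<and>
      tcomp C (tadd C f g) k = tadd C (tcomp C f k) (tcomp C g k)"
  using preadditive unfolding is_preadditive_def by (elim conjE)

lemma add_assoc:
  "tsrc C g = tsrc C f \<Longrightarrow> ttgt C g = ttgt C f \<Longrightarrow> tsrc C h = tsrc C f \<Longrightarrow> ttgt C h = ttgt C f \<Longrightarrow>
    tadd C (tadd C f g) h = tadd C f (tadd C g h)"
  using hom_abelian_group_laws unfolding hom_def by blast

lemma add_comm: "tsrc C g = tsrc C f \<Longrightarrow> ttgt C g = ttgt C f \<Longrightarrow> tadd C f g = tadd C g f"
  using hom_abelian_group_laws unfolding hom_def by blast

lemma add_zero_right [simp]: "tsrc C f = X \<Longrightarrow> ttgt C f = Y \<Longrightarrow> tadd C f (tzero C X Y) = f"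
  using hom_abelian_group_laws unfolding hom_def by blast

lemma add_neg_right [simp]: "tadd C f (tneg C f) = tzero C (tsrc C f) (ttgt C f)"
  using hom_abelian_group_laws unfolding hom_def by blast

lemma comp_add_right:
  "tsrc C g = tsrc C f \<Longrightarrow> ttgt C g = ttgt C f \<Longrightarrow> tsrc C h = ttgt C f \<Longrightarrow>
    tcomp C h (tadd C f g) = tadd C (tcomp C h f) (tcomp C h g)"
  using comp_bilinear_laws[rule_format, of f "tsrc C f" "ttgt C f" g h "ttgt C h" "tid C (tsrc C f)"]
  by (simp add: hom_def)

lemma comp_add_left:
  "tsrc C g = tsrc C f \<Longrightarrow> ttgt C g = ttgt C f \<Longrightarrow> ttgt C k = tsrc C f \<Longrightarrow>
    tcomp C (tadd C f g) k = tadd C (tcomp C f k) (tcomp C g k)"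
  using comp_bilinear_laws[rule_format, of f "tsrc C f" "ttgt C f" g "tid C (ttgt C f)" _ k]
  by (simp add: hom_def)

lemma add_zero_left [simp]: "tsrc C f = X \<Longrightarrow> ttgt C f = Y \<Longrightarrow> tadd C (tzero C X Y) f = f"
  using add_comm[of "tzero C X Y" f] by simp

lemma add_neg_left [simp]: "tadd C (tneg C f) f = tzero C (tsrc C f) (ttgt C f)"
  using add_comm[of "tneg C f" f] by simp

lemma add_left_cancel:
  assumes "tsrc C g = tsrc C f" "ttgt C g = ttgt C f" "tsrc C k = tsrc C f" "ttgt C k = ttgt C f"
    and "tadd C f g = tadd C f k"
  shows "g = k"
proof -
  have "g = tadd C (tadd C (tneg C f) f) g" using assms by simp
  also have "\<dots> = tadd C (tneg C f) (tadd C f g)" by (rule add_assoc) (use assms in simp_all)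
  also have "\<dots> = tadd C (tneg C f) (tadd C f k)" unfolding assms(5) ..
  also have "\<dots> = tadd C (tadd C (tneg C f) f) k" by (rule add_assoc[symmetric]) (use assms in simp_all)
  also have "\<dots> = k" using assms by simp
  finally show ?thesis .
qed

lemma comp_zero_right [simp]: "tsrc C h = Y \<Longrightarrow> tcomp C h (tzero C X Y) = tzero C X (ttgt C h)"
  by (rule add_left_cancel[where f = "tcomp C h (tzero C X Y)"]) (simp_all flip: comp_add_right)

lemma comp_zero_left [simp]: "ttgt C k = Y \<Longrightarrow> tcomp C (tzero C Y W) k = tzero C (tsrc C k) W"
  by (rule add_left_cancel[where f = "tcomp C (tzero C Y W) k"]) (simp_all flip: comp_add_left)

lemma neg_unique:
  "tsrc C g = tsrc C f \<Longrightarrow> ttgt C g = ttgt C f \<Longrightarrow> tadd C f g = tzero C (tsrc C f) (ttgt C f) \<Longrightarrow>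
    g = tneg C f"
  by (rule add_left_cancel[where f = f]) simp_all

lemma neg_neg [simp]: "tneg C (tneg C f) = f"
  by (rule neg_unique[symmetric]) simp_all

lemma neg_eq_iff [simp]: "tneg C f = tneg C g \<longleftrightarrow> f = g"
  by (metis neg_neg)

lemma neg_zero [simp]: "tneg C (tzero C X Y) = tzero C X Y"
  by (rule neg_unique[symmetric]) simp_all

lemma neg_eq_zero_iff [simp]: "tneg C f = tzero C X Y \<longleftrightarrow> f = tzero C X Y"
  by (metis neg_neg neg_zero)

lemma comp_neg_right: "tsrc C h = ttgt C f \<Longrightarrow> tcomp C h (tneg C f) = tneg C (tcomp C h f)"
  by (rule neg_unique) (simp_all flip: comp_add_right)

lemma comp_neg_left: "tsrc C f = ttgt C k \<Longrightarrow> tcomp C (tneg C f) k = tneg C (tcomp C f k)"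
  by (rule neg_unique) (simp_all flip: comp_add_left)

lemma shift: "shift_ok C"
  using triangulated unfolding is_triangulated_def by (elim conjE) blast

lemma shm_src [simp]: "tsrc C (tshm C f) = tsh C (tsrc C f)"
  using shift unfolding shift_ok_def hom_def by simp

lemma shm_tgt [simp]: "ttgt C (tshm C f) = tsh C (ttgt C f)"
  using shift unfolding shift_ok_def hom_def by simp

lemma shm_id [simp]: "tshm C (tid C X) = tid C (tsh C X)"
  using shift unfolding shift_ok_def by simp

lemma shm_comp: "tsrc C g = ttgt C f \<Longrightarrow> tshm C (tcomp C g f) = tcomp C (tshm C g) (tshm C f)"
  using shift unfolding shift_ok_def by simp

lemma shm_bij: "bij_betw (tshm C) (hom C X Y) (hom C (tsh C X) (tsh C Y))"
  using shift unfolding shift_ok_def by simp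

lemma dist_is_triangle: "T \<in> tdist C \<Longrightarrow> is_triangle C T"
  using triangulated unfolding is_triangulated_def by (elim conjE) blast

lemma dist_src_tgt:
  assumes "(f, g, h) \<in> tdist C"
  shows "tsrc C g = ttgt C f" "tsrc C h = ttgt C g" "ttgt C h = tsh C (tsrc C f)"
  using dist_is_triangle[OF assms] unfolding is_triangle_def by simp_all

lemma dist_zero_obj: "is_zero_obj C Z \<Longrightarrow> (tid C X, tzero C X Z, tzero C Z (tsh C X)) \<in> tdist C"
  using triangulated unfolding is_triangulated_def by (elim conjE) blast

lemma dist_iso_closed:
  "T \<in> tdist C \<Longrightarrow> is_triangle C T' \<Longrightarrow> tri_morph C T T' a b c \<Longrightarrow>
    is_iso C a \<Longrightarrow> is_iso C b \<Longrightarrow> is_iso C c \<Longrightarrow> T' \<in> tdist C"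
  using triangulated unfolding is_triangulated_def by (elim conjE) blast

lemma dist_exists: "\<exists>g h. (f, g, h) \<in> tdist C"
  using triangulated unfolding is_triangulated_def by (elim conjE) blast

lemma dist_rotate: "(f, g, h) \<in> tdist C \<Longrightarrow> (g, h, tneg C (tshm C f)) \<in> tdist C"
  using triangulated dist_is_triangle unfolding is_triangulated_def by (elim conjE) blast

lemma dist_morphism_exists:
  assumes "(f, g, h) \<in> tdist C" "(f', g', h') \<in> tdist C"
    and "a \<in> hom C (tsrc C f) (tsrc C f')" "b \<in> hom C (ttgt C f) (ttgt C f')"
    and "tcomp C f' a = tcomp C b f"
  shows "\<exists>c. tri_morph C (f, g, h) (f', g', h') a b c"
proof -
  have "\<forall>f g h f' g' h' a b. (f, g, h) \<in> tdist C \<longrightarrow> (f', g', h') \<in> tdist C \<longrightarrow>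
      a \<in> hom C (tsrc C f) (tsrc C f') \<longrightarrow> b \<in> hom C (ttgt C f) (ttgt C f') \<longrightarrow>
      tcomp C f' a = tcomp C b f \<longrightarrow> (\<exists>c. tri_morph C (f, g, h) (f', g', h') a b c)"
    using triangulated unfolding is_triangulated_def by (elim conjE)
  then show ?thesis using assms by blast
qed

lemma zero_obj_exists: "\<exists>Z. is_zero_obj C Z"
  using additive unfolding is_additive_def by blast

lemma dist_comp_zero:
  assumes "(f, g, h) \<in> tdist C"
  shows "tcomp C g f = tzero C (tsrc C f) (ttgt C g)"
proof -
  obtain Z where Z: "is_zero_obj C Z" using zero_obj_exists by blast
  let ?X = "tsrc C f"
  obtain c where "tri_morph C (tid C ?X, tzero C ?X Z, tzero C Z (tsh C ?X)) (f, g, h) (tid C ?X) f c"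
    using dist_morphism_exists[OF dist_zero_obj[OF Z] assms, where a = "tid C ?X" and b = f] by (auto simp: hom_def)
  then have "tsrc C c = Z" "ttgt C c = ttgt C g" "tcomp C g f = tcomp C c (tzero C ?X Z)"
    unfolding tri_morph_def hom_def by auto
  then show ?thesis by simp
qed

text \<open>The rotated triangle W \<rightarrow> 0 \<rightarrow> W[1] maps to the rotated triangle of (f, g, h);
  the third component of this morphism is y[1] for some y, the shift being fully faithful.\<close>

lemma dist_exact:
  assumes d: "(f, g, h) \<in> tdist C" and x: "tsrc C x = W" "ttgt C x = ttgt C f"
    and gx: "tcomp C g x = tzero C W (ttgt C g)"
  obtains y where "tsrc C y = W" "ttgt C y = tsrc C f" "x = tcomp C f y"
proof -
  obtain Z where Z: "is_zero_obj C Z" using zero_obj_exists by blast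
  have R0: "(tzero C W Z, tzero C Z (tsh C W), tneg C (tid C (tsh C W))) \<in> tdist C"
    using dist_rotate[OF dist_zero_obj[OF Z]] by simp
  note st = dist_src_tgt[OF d]
  obtain c where "tri_morph C (tzero C W Z, tzero C Z (tsh C W), tneg C (tid C (tsh C W)))
      (g, h, tneg C (tshm C f)) x (tzero C Z (ttgt C g)) c"
    using dist_morphism_exists[OF R0 dist_rotate[OF d], where a = x and b = "tzero C Z (ttgt C g)"] x st gx
    by (auto simp: hom_def)
  then have c: "c \<in> hom C (tsh C W) (tsh C (tsrc C f))"
    and sq: "tcomp C (tneg C (tshm C f)) c = tcomp C (tshm C x) (tneg C (tid C (tsh C W)))"
    unfolding tri_morph_def using st by auto
  have fc: "tcomp C (tshm C f) c = tshm C x"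
    using sq c x by (simp add: hom_def comp_neg_left comp_neg_right)
  obtain y where y: "y \<in> hom C W (tsrc C f)" and cy: "c = tshm C y"
    using c shm_bij[of W "tsrc C f"] by (auto simp: bij_betw_def)
  have "tshm C (tcomp C f y) = tshm C x" using fc cy y shm_comp[of f y] by (simp add: hom_def)
  moreover have "tcomp C f y \<in> hom C W (ttgt C f)" "x \<in> hom C W (ttgt C f)"
    using y x by (simp_all add: hom_def)
  moreover have "inj_on (tshm C) (hom C W (ttgt C f))"
    using shm_bij[of W "ttgt C f"] by (simp add: bij_betw_def)
  ultimately have "tcomp C f y = x" by (meson inj_onD)
  with y show thesis by (intro that) (auto simp: hom_def)
qed

lemma dist_third_zero_of_split_mono:
  assumes d: "(a, g, h) \<in> tdist C" and a: "tsrc C a = U" "ttgt C a = P"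
    and b: "tsrc C b = P" "ttgt C b = U" and ba: "tcomp C b a = tid C U"
  shows "h = tzero C (ttgt C g) (tsh C U)"
proof -
  note st = dist_src_tgt[OF d]
  have "tcomp C (tneg C (tshm C a)) h = tzero C (ttgt C g) (tsh C P)"
    using dist_comp_zero[OF dist_rotate[OF dist_rotate[OF d]]] st a by simp
  then have ah: "tcomp C (tshm C a) h = tzero C (ttgt C g) (tsh C P)"
    using st a by (simp add: comp_neg_left)
  have "h = tcomp C (tshm C (tcomp C b a)) h" using ba st a by simp
  also have "\<dots> = tcomp C (tshm C b) (tcomp C (tshm C a) h)"
    using st a b by (simp add: shm_comp comp_assoc)
  finally show ?thesis using ah b by simp
qed

lemma dist_section_of_split_mono:
  assumes d: "(a, g, h) \<in> tdist C" and a: "tsrc C a = U" "ttgt C a = P" and g: "ttgt C g = Q"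
    and b: "tsrc C b = P" "ttgt C b = U" and ba: "tcomp C b a = tid C U"
  obtains s where "tsrc C s = Q" "ttgt C s = P" "tcomp C g s = tid C Q"
    "tcomp C b s = tzero C Q U"
proof -
  note st = dist_src_tgt[OF d]
  have "h = tzero C Q (tsh C U)" using dist_third_zero_of_split_mono[OF d a b ba] g by simp
  then obtain s0 where s0: "tsrc C s0 = Q" "ttgt C s0 = P" "tid C Q = tcomp C g s0"
    using dist_exact[OF dist_rotate[OF d], of "tid C Q" Q] st a g by auto
  define s where "s = tadd C s0 (tneg C (tcomp C a (tcomp C b s0)))"
  have s: "tsrc C s = Q" "ttgt C s = P" using s0 a b by (simp_all add: s_def)
  have "tcomp C g a = tzero C U Q" using dist_comp_zero[OF d] a g by simp
  then have "tcomp C g s = tid C Q"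
    using s0 a b st g by (simp add: s_def comp_add_right comp_neg_right flip: comp_assoc)
  moreover have "tcomp C b s = tzero C Q U"
    using s0 a b ba by (simp add: s_def comp_add_right comp_neg_right flip: comp_assoc)
  ultimately show thesis using s that by blast
qed

lemma dist_split_mono_decomp:
  assumes d: "(a, g, h) \<in> tdist C" and a: "tsrc C a = U" "ttgt C a = P" and g: "ttgt C g = Q"
    and b: "tsrc C b = P" "ttgt C b = U" and ba: "tcomp C b a = tid C U"
    and s: "tsrc C s = Q" "ttgt C s = P" and gs: "tcomp C g s = tid C Q"
    and bs: "tcomp C b s = tzero C Q U"
  shows "tadd C (tcomp C a b) (tcomp C s g) = tid C P"
proof -
  note maps = dist_src_tgt[OF d] a b g s
  \<comment> \<open>g kills 1 - s g, which therefore factors through a; composing with b shows the factor is b.\<close>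
  define x where "x = tadd C (tid C P) (tneg C (tcomp C s g))"
  have x: "tsrc C x = P" "ttgt C x = P" using maps by (simp_all add: x_def)
  have "tcomp C g x = tzero C P Q"
    using maps gs by (simp add: x_def comp_add_right comp_neg_right flip: comp_assoc)
  then obtain t where t: "tsrc C t = P" "ttgt C t = U" and xt: "x = tcomp C a t"
    using dist_exact[OF d x(1)] x maps by auto
  have "t = tcomp C b x" using xt t maps ba by (simp flip: comp_assoc)
  also have "\<dots> = b"
    using maps bs by (simp add: x_def comp_add_right comp_neg_right flip: comp_assoc)
  finally have "tcomp C a b = tadd C (tid C P) (tneg C (tcomp C s g))"
    using xt by (simp add: x_def)
  then have "tadd C (tcomp C a b) (tcomp C s g) =
      tadd C (tadd C (tid C P) (tneg C (tcomp C s g))) (tcomp C s g)" by simp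
  also have "\<dots> = tadd C (tid C P) (tadd C (tneg C (tcomp C s g)) (tcomp C s g))"
    by (rule add_assoc) (use maps in simp_all)
  finally show ?thesis using maps by simp
qed

lemma hsum_src_tgt:
  "\<forall>k<n. tsrc C (F k) = X \<and> ttgt C (F k) = Y \<Longrightarrow>
    tsrc C (hsum C X Y F n) = X \<and> ttgt C (hsum C X Y F n) = Y"
  by (induction n) auto

lemma hsum_cong: "\<forall>k<n. F k = G k \<Longrightarrow> hsum C X Y F n = hsum C X Y G n"
  by (induction n) auto

lemma hsum_comp_comp:
  assumes F: "\<forall>k<n. tsrc C (F k) = X \<and> ttgt C (F k) = Y"
    and g: "tsrc C g = Y" "ttgt C g = Y'" and s: "tsrc C s = X'" "ttgt C s = X"
  shows "hsum C X' Y' (\<lambda>k. tcomp C g (tcomp C (F k) s)) n = tcomp C g (tcomp C (hsum C X Y F n) s)"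
  using F
proof (induction n)
  case 0
  then show ?case using g s by simp
next
  case (Suc n)
  have "tsrc C (F n) = X" "ttgt C (F n) = Y"
    and "tsrc C (hsum C X Y F n) = X" "ttgt C (hsum C X Y F n) = Y"
    using Suc.prems hsum_src_tgt[of n F X Y] by auto
  then show ?case using Suc g s by (simp add: comp_add_left comp_add_right)
qed

lemma is_power_complement:
  assumes ip: "\<forall>k<Suc n. i k \<in> hom C U P \<and> p k \<in> hom C P U"
    and orth: "\<forall>k<Suc n. \<forall>l<Suc n. tcomp C (p k) (i l) = (if k = l then tid C U else tzero C U U)"
    and sum: "hsum C P P (\<lambda>k. tcomp C (i k) (p k)) (Suc n) = tid C P"
    and g: "tsrc C g = P" "ttgt C g = Q" and s: "tsrc C s = Q" "ttgt C s = P"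
    and gi: "tcomp C g (i n) = tzero C U Q" and gs: "tcomp C g s = tid C Q"
    and decomp: "tadd C (tcomp C (i n) (p n)) (tcomp C s g) = tid C P"
  shows "is_power C U n Q"
proof -
  define i' where "i' k = tcomp C g (i k)" for k
  define p' where "p' k = tcomp C (p k) s" for k
  have maps: "tsrc C (i k) = U \<and> ttgt C (i k) = P \<and> tsrc C (p k) = P \<and> ttgt C (p k) = U"
    if "k < Suc n" for k
    using ip that by (auto simp: hom_def)
  have "\<forall>k<n. i' k \<in> hom C U Q \<and> p' k \<in> hom C Q U"
    using maps g s by (auto simp: hom_def i'_def p'_def)
  moreover have "tcomp C (p' k) (i' l) = (if k = l then tid C U else tzero C U U)"
    if "k < n" "l < n" for k l
  proof -
    have "tcomp C (p k) (i l) = tcomp C (p k) (tcomp C (tadd C (tcomp C (i n) (p n)) (tcomp C s g)) (i l))"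
      using decomp maps[of l] that by simp
    also have "\<dots> = tadd C (tcomp C (tcomp C (p k) (i n)) (tcomp C (p n) (i l))) (tcomp C (p' k) (i' l))"
      using maps[of k] maps[of l] maps[of n] that g s
      by (simp add: comp_add_left comp_add_right comp_assoc p'_def i'_def)
    also have "\<dots> = tcomp C (p' k) (i' l)"
      using orth maps[of k] maps[of l] maps[of n] that g s by (simp add: p'_def i'_def)
    finally show ?thesis using orth that by simp
  qed
  moreover have "hsum C Q Q (\<lambda>k. tcomp C (i' k) (p' k)) n = tid C Q"
  proof -
    let ?S = "hsum C P P (\<lambda>k. tcomp C (i k) (p k)) n"
    have F: "\<forall>k<n. tsrc C (tcomp C (i k) (p k)) = P \<and> ttgt C (tcomp C (i k) (p k)) = P"
      using maps by simp
    have S: "tsrc C ?S = P" "ttgt C ?S = P" using hsum_src_tgt[OF F] by simp_all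
    have "hsum C Q Q (\<lambda>k. tcomp C (i' k) (p' k)) n =
        hsum C Q Q (\<lambda>k. tcomp C g (tcomp C (tcomp C (i k) (p k)) s)) n"
      by (rule hsum_cong) (use maps g s in \<open>simp add: i'_def p'_def comp_assoc\<close>)
    also have "\<dots> = tcomp C g (tcomp C ?S s)" by (rule hsum_comp_comp[OF F g s])
    also have "\<dots> = tcomp C g (tcomp C (tadd C ?S (tcomp C (i n) (p n))) s)"
      using gi maps[of n] S g s by (simp add: comp_add_left comp_add_right flip: comp_assoc)
    also have "\<dots> = tid C Q" using sum gs s by simp
    finally show ?thesis .
  qed
  ultimately show ?thesis unfolding is_power_def by blast
qed

lemma dist_cone_of_power:
  assumes "is_power C U (Suc n) P"
  obtains a g h where "(a, g, h) \<in> tdist C" "tsrc C a = U" "ttgt C a = P" "is_power C U n (ttgt C g)"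
proof -
  obtain i p where ip: "\<forall>k<Suc n. i k \<in> hom C U P \<and> p k \<in> hom C P U"
    and orth: "\<forall>k<Suc n. \<forall>l<Suc n. tcomp C (p k) (i l) = (if k = l then tid C U else tzero C U U)"
    and sum: "hsum C P P (\<lambda>k. tcomp C (i k) (p k)) (Suc n) = tid C P"
    using assms unfolding is_power_def by blast
  have a: "tsrc C (i n) = U" "ttgt C (i n) = P" and b: "tsrc C (p n) = P" "ttgt C (p n) = U"
    using ip by (simp_all add: hom_def)
  have ba: "tcomp C (p n) (i n) = tid C U" using orth by simp
  obtain g h where d: "(i n, g, h) \<in> tdist C" using dist_exists by blast
  define Q where "Q = ttgt C g"
  have g: "tsrc C g = P" "ttgt C g = Q" using dist_src_tgt[OF d] a by (simp_all add: Q_def)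
  obtain s where s: "tsrc C s = Q" "ttgt C s = P" and gs: "tcomp C g s = tid C Q"
    and bs: "tcomp C (p n) s = tzero C Q U"
    using dist_section_of_split_mono[OF d a g(2) b ba] by blast
  have "tadd C (tcomp C (i n) (p n)) (tcomp C s g) = tid C P"
    using dist_split_mono_decomp[OF d a g(2) b ba s gs bs] .
  moreover have "tcomp C g (i n) = tzero C U Q" using dist_comp_zero[OF d] a g by simp
  ultimately have "is_power C U n (ttgt C g)"
    using is_power_complement[OF ip orth sum g s] gs by (simp add: Q_def)
  with d a show thesis using that by blast
qed

end

lemma qspan_subset:
  assumes "is_Q_subspace H" "S \<subseteq> H"
  shows "qspan S \<subseteq> H"
proof
  fix v assume "v \<in> qspan S"
  then show "v \<in> H" by induction (use assms in \<open>auto simp: is_Q_subspace_def\<close>)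
qed

lemma qspan_mono:
  assumes "S \<subseteq> S'"
  shows "qspan S \<subseteq> qspan S'"
proof
  fix v assume "v \<in> qspan S"
  then show "v \<in> qspan S'" by induction (use assms in \<open>auto intro: qspan.intros\<close>)
qed

lemma Q_subspace_lincomb:
  assumes "is_Q_subspace H" "u \<in> H" "v \<in> H"
  shows "(\<lambda>x. a * u x + b * v x) \<in> H"
proof -
  have "(\<lambda>x. a * u x) \<in> H" "(\<lambda>x. b * v x) \<in> H" using assms unfolding is_Q_subspace_def by auto
  then show ?thesis using assms(1) unfolding is_Q_subspace_def by auto
qed

locale grothendieck_subspace = triangulated_category C for C :: "('o, 'm) tricat" +
  fixes H :: "('o \<Rightarrow> rat) set"
  assumes subspace: "is_Q_subspace H" and rels_in: "groth_rels C \<subseteq> H"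
begin

lemma lincomb_in:
  "u \<in> H \<Longrightarrow> v \<in> H \<Longrightarrow> w = (\<lambda>x. a * u x + b * v x) \<Longrightarrow> w \<in> H"
  using Q_subspace_lincomb[OF subspace] by blast

lemma dist_rel_in:
  "(f, g, h) \<in> tdist C \<Longrightarrow> (\<lambda>x. gen (ttgt C f) x - gen (tsrc C f) x - gen (ttgt C g) x) \<in> H"
  using rels_in unfolding groth_rels_def by blast

lemma zero_obj_class: "is_zero_obj C Z \<Longrightarrow> gen Z \<in> H"
  by (rule lincomb_in[OF dist_rel_in dist_rel_in, where a = "-1" and b = 0])
    (auto simp: fun_eq_iff intro: dist_zero_obj)

lemma cone_class:
  assumes "(f, g, h) \<in> tdist C" "gen (tsrc C f) \<in> H" "gen (ttgt C f) \<in> H"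
  shows "gen (ttgt C g) \<in> H"
proof -
  have "(\<lambda>x. gen (ttgt C f) x - gen (ttgt C g) x) \<in> H"
    by (rule lincomb_in[OF dist_rel_in[OF assms(1)] assms(2), where a = 1 and b = 1]) simp
  then show ?thesis by (rule lincomb_in[OF _ assms(3), where a = "-1" and b = 1]) simp
qed

lemma shift_class_iff: "gen (tsh C X) \<in> H \<longleftrightarrow> gen X \<in> H"
proof -
  obtain Z where Z: "is_zero_obj C Z" using zero_obj_exists by blast
  have "(\<lambda>x. gen Z x - gen X x - gen (tsh C X) x) \<in> H"
    using dist_rel_in[OF dist_rotate[OF dist_zero_obj[OF Z]]] by simp
  then have sum: "(\<lambda>x. gen X x + gen (tsh C X) x) \<in> H"
    by (rule lincomb_in[OF zero_obj_class[OF Z], where a = 1 and b = "-1"]) (simp add: fun_eq_iff)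
  show ?thesis
  proof
    assume "gen (tsh C X) \<in> H"
    then show "gen X \<in> H" by (rule lincomb_in[OF sum, where a = 1 and b = "-1"]) simp
  next
    assume "gen X \<in> H"
    then show "gen (tsh C X) \<in> H" by (rule lincomb_in[OF sum, where a = 1 and b = "-1"]) simp
  qed
qed

lemma isomorphic_class:
  assumes XY: "isomorphic C X Y" and X: "gen X \<in> H"
  shows "gen Y \<in> H"
proof -
  obtain f where f: "tsrc C f = X" "ttgt C f = Y" "is_iso C f"
    using XY unfolding isomorphic_def hom_def by blast
  obtain Z where Z: "is_zero_obj C Z" using zero_obj_exists by blast
  have "is_iso C (tid C W)" for W unfolding is_iso_def by (auto simp: hom_def)
  moreover have "is_triangle C (f, tzero C Y Z, tzero C Z (tsh C X))"
    unfolding is_triangle_def using f by simp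
  moreover have "tri_morph C (tid C X, tzero C X Z, tzero C Z (tsh C X))
      (f, tzero C Y Z, tzero C Z (tsh C X)) (tid C X) f (tid C Z)"
    unfolding tri_morph_def using f by (simp add: hom_def)
  ultimately have "(f, tzero C Y Z, tzero C Z (tsh C X)) \<in> tdist C"
    using dist_iso_closed[OF dist_zero_obj[OF Z]] f by blast
  then have "(\<lambda>x. gen Y x - gen X x - gen Z x) \<in> H" using dist_rel_in f by fastforce
  then have "(\<lambda>x. gen Y x - gen X x) \<in> H"
    by (rule lincomb_in[OF _ zero_obj_class[OF Z], where a = 1 and b = 1]) simp
  then show ?thesis by (rule lincomb_in[OF _ X, where a = 1 and b = 1]) simp
qed

lemma power_class: "is_power C U n P \<Longrightarrow> (\<lambda>x. gen P x - of_nat n * gen U x) \<in> H"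
proof (induction n arbitrary: P)
  case 0
  then have "is_zero_obj C P" unfolding is_power_def is_zero_obj_def by auto
  then show ?case using zero_obj_class by simp
next
  case (Suc n)
  obtain a g h where d: "(a, g, h) \<in> tdist C" and "tsrc C a = U" "ttgt C a = P"
    and "is_power C U n (ttgt C g)"
    using dist_cone_of_power[OF Suc.prems] by blast
  then have "(\<lambda>x. gen P x - gen U x - gen (ttgt C g) x) \<in> H"
    and "(\<lambda>x. gen (ttgt C g) x - of_nat n * gen U x) \<in> H"
    using dist_rel_in[OF d] Suc.IH by simp_all
  then show ?case by (rule lincomb_in[where a = 1 and b = 1]) (simp add: fun_eq_iff algebra_simps)
qed

lemma class_triangulated_subcat: "triangulated_subcat C {X. gen X \<in> H}"
  unfolding triangulated_subcat_def mem_Collect_eq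
  by (intro conjI allI impI) (auto intro: isomorphic_class cone_class simp: shift_class_iff)

lemma class_radical_subcat: "radical_subcat C {X. gen X \<in> H}"
  unfolding radical_subcat_def
proof (intro allI impI)
  fix U n P assume n: "1 \<le> n" and "is_power C U n P" and "P \<in> {X. gen X \<in> H}"
  then have "gen P \<in> H" "(\<lambda>x. gen P x - of_nat n * gen U x) \<in> H"
    using power_class by simp_all
  then have "gen U \<in> H"
    by (rule lincomb_in[where a = "1 / of_nat n" and b = "- 1 / of_nat n"])
      (use n in \<open>simp add: fun_eq_iff field_simps\<close>)
  then show "U \<in> {X. gen X \<in> H}" by simp
qed

lemma maximal_I_H_eq_class:
  assumes D: "D \<in> I_H C H" and max: "\<forall>D' \<in> I_H C H. D \<subseteq> D' \<longrightarrow> D' = D"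
  shows "D = {X. gen X \<in> H}"
proof -
  have dense: "dense_subcat C D" and im: "image_GQ C D = H" using D unfolding I_H_def by auto
  have sub: "D \<subseteq> {X. gen X \<in> H}"
    using im unfolding image_GQ_def by (auto intro: qspan.base)
  have "image_GQ C {X. gen X \<in> H} \<subseteq> H"
    unfolding image_GQ_def by (rule qspan_subset[OF subspace]) (use rels_in in auto)
  moreover have "H \<subseteq> image_GQ C {X. gen X \<in> H}"
  proof -
    have "H = qspan (gen ` D \<union> groth_rels C)" using im unfolding image_GQ_def by simp
    also have "\<dots> \<subseteq> qspan (gen ` {X. gen X \<in> H} \<union> groth_rels C)"
      by (rule qspan_mono) (use sub in blast)
    finally show ?thesis unfolding image_GQ_def .
  qed
  moreover have "dense_subcat C {X. gen X \<in> H}"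
    using dense sub class_triangulated_subcat unfolding dense_subcat_def by blast
  ultimately have "{X. gen X \<in> H} \<in> I_H C H" unfolding I_H_def by auto
  from max[rule_format, OF this sub] show ?thesis by (rule sym)
qed

end

theorem lemma3p8:
  fixes C :: "('o, 'm) tricat" and H :: "('o \<Rightarrow> rat) set" and D :: "'o set"
  assumes "is_triangulated C"
    and "is_Q_subspace H" and "groth_rels C \<subseteq> H"
    and "D \<in> I_H C H"
    and "\<forall>D' \<in> I_H C H. D \<subseteq> D' \<longrightarrow> D' = D"
  shows "dense_subcat C D \<and> radical_subcat C D"
proof -
  interpret grothendieck_subspace C H
    using assms(1-3) by unfold_locales
  have "dense_subcat C D" using assms(4) unfolding I_H_def by simp
  moreover have "D = {X. gen X \<in> H}" by (rule maximal_I_H_eq_class[OF assms(4,5)])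
  ultimately show ?thesis using class_radical_subcat by simp
qed

end
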